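(* Let $F\ge1$ and $n_1,\dots,n_F$ be positive integers with $n_1\ge2$, not $(F,n_1)=(1,2)$, and let $p_a$, $r^{(k)}$, $r$ be as in the context. Label the vertices of a regular $r$-gon by $0,1,\dots,r-1$ (modulo $r$) clockwise, and assign to the vertex $t\,r^{(2)} \bmod r$ the time-ordered index $t\in\{0,\dots,r-1\}$. Then for every $a=1,\dots,F$: if the vertex $k$ has time-ordered index $t$, then the vertex $k+r^{(a+1)}$ (mod $r$) has time-ordered index $t+(-1)^{a-1}p_a$ (mod $r$).
   Context: For $1\le k\le a\le F$, let $p^{(k)}_a/q^{(k)}_a$ (coprime positive integers) equal the continued fraction $[n_a,\dots,n_k]:=1/(n_a+1/(n_{a-1}+\cdots+1/n_k))$, $[n_k]=1/n_k$; write $p_a=p^{(1)}_a$. Set $r^{(k)}=p^{(k)}_F+q^{(k)}_F$ for $1\le k\le F$, $r^{(F+1)}=r^{(F+2)}=1$, $r=r^{(1)}$. The integers $r$ and $r^{(2)}$ are coprime, so the time-ordered index is a well-defined bijection between vertices and $\mathbb{Z}/r\mathbb{Z}$. *)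

theory Defs
  imports Complex_Main
begin

text \<open>Continued fraction [n_a,...,n_k] = 1/(n_a + 1/(n_{a-1} + ... + 1/n_k)),
  with [n_k] = 1/n_k.  Meaningful for k \<le> a.\<close>
fun cfrac :: "(nat \<Rightarrow> nat) \<Rightarrow> nat \<Rightarrow> nat \<Rightarrow> rat" where
  "cfrac n k 0 = 1 / of_nat (n k)"
| "cfrac n k (Suc a) =
     (if Suc a \<le> k then 1 / of_nat (n k)
      else 1 / (of_nat (n (Suc a)) + cfrac n k a))"

definition cf_p :: "(nat \<Rightarrow> nat) \<Rightarrow> nat \<Rightarrow> nat \<Rightarrow> int" where
  "cf_p n k a = fst (quotient_of (cfrac n k a))"

definition cf_q :: "(nat \<Rightarrow> nat) \<Rightarrow> nat \<Rightarrow> nat \<Rightarrow> int" where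
  "cf_q n k a = snd (quotient_of (cfrac n k a))"

text \<open>r^{(k)} = p^{(k)}_F + q^{(k)}_F for 1 \<le> k \<le> F, and r^{(k)} = 1 for k > F
  (only k = F+1, F+2 are used).\<close>
definition cf_r :: "(nat \<Rightarrow> nat) \<Rightarrow> nat \<Rightarrow> nat \<Rightarrow> int" where
  "cf_r n F k = (if k \<le> F then cf_p n k F + cf_q n k F else 1)"

definition has_time_index :: "int \<Rightarrow> int \<Rightarrow> int \<Rightarrow> int \<Rightarrow> bool" where
  "has_time_index r r2 v t \<longleftrightarrow> 0 \<le> t \<and> t < r \<and> (t * r2) mod r = v mod r"

end

theory Submission
  imports Defs
begin

text \<open>Both the reduced fractions p/q and the numbers r = p + q are continuants of the partial
  quotients; r is the continuant with the last quotient n_F raised by one. The sequence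
  u_k = r^(k) therefore satisfies u_k = m_k u_(k+1) + u_(k+2), and the classical determinant
  identity for continuants gives p_a r^(2) - Q r = (-1)^(a-1) r^(a+1) for some integer Q.
  Reduced mod r, shifting the time index by (-1)^(a-1) p_a shifts the vertex t r^(2) by r^(a+1).\<close>

lemma quotient_of_int_div:
  assumes "0 < b" "coprime a b"
  shows "quotient_of (of_int a / of_int b) = (a, b)"
  using assms by (simp flip: Fract_of_int_quotient add: quotient_of_Fract)

text \<open>Lengths are shifted by one: \<open>continuant x i (Suc l)\<close> is the continuant of the l entries
  x i, ..., x (i + l - 1), and \<open>continuant x i 0 = 0\<close> plays the role of the continuant of length -1.\<close>
fun continuant :: "(nat \<Rightarrow> int) \<Rightarrow> nat \<Rightarrow> nat \<Rightarrow> int" where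
  "continuant x i 0 = 0"
| "continuant x i (Suc 0) = 1"
| "continuant x i (Suc (Suc l)) = x (i + l) * continuant x i (Suc l) + continuant x i l"

lemma continuant_Suc_Suc_front:
  "continuant x i (Suc (Suc l)) = x i * continuant x (Suc i) (Suc l) + continuant x (Suc (Suc i)) l"
proof (induction l rule: induct_nat_012)
  case (ge2 l)
  have "continuant x i (Suc (Suc (Suc (Suc l))))
      = x (i + Suc (Suc l)) * continuant x i (Suc (Suc (Suc l))) + continuant x i (Suc (Suc l))"
    by (rule continuant.simps(3))
  also have "\<dots> = x i * (x (i + Suc (Suc l)) * continuant x (Suc i) (Suc (Suc l)) + continuant x (Suc i) (Suc l))
      + (x (i + Suc (Suc l)) * continuant x (Suc (Suc i)) (Suc l) + continuant x (Suc (Suc i)) l)"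
    unfolding ge2.IH by algebra
  also have "\<dots> = x i * continuant x (Suc i) (Suc (Suc (Suc l))) + continuant x (Suc (Suc i)) (Suc (Suc l))"
    by simp
  finally show ?case .
qed simp_all

lemma continuant_cong:
  "(\<And>j. i \<le> j \<Longrightarrow> Suc j < i + l \<Longrightarrow> x j = y j) \<Longrightarrow> continuant x i l = continuant y i l"
  by (induction x i l rule: continuant.induct) auto

lemma continuant_Suc_pos:
  assumes "\<And>j. i \<le> j \<Longrightarrow> j < i + l \<Longrightarrow> 1 \<le> x j"
  shows "1 \<le> continuant x i (Suc l)"
  using assms
proof (induction l rule: induct_nat_012)
  case (ge2 l)
  then have "1 \<le> continuant x i (Suc l)" "1 \<le> continuant x i (Suc (Suc l))" "1 \<le> x (i + Suc l)"
    by auto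
  then show ?case by (simp add: add_increasing)
qed auto

lemma coprime_continuant_Suc: "coprime (continuant x i l) (continuant x i (Suc l))"
proof (induction l)
  case (Suc l)
  then show ?case
    by (simp add: coprime_iff_gcd_eq_1 gcd_add_mult gcd.commute)
qed simp

lemma continuant_last_plus_one:
  assumes "\<And>j. j < i + l \<Longrightarrow> y j = x j" "y (i + l) = x (i + l) + 1"
  shows "continuant y i (Suc (Suc l)) = continuant x i (Suc (Suc l)) + continuant x i (Suc l)"
proof -
  have "continuant y i (Suc l) = continuant x i (Suc l)" "continuant y i l = continuant x i l"
    by (rule continuant_cong; use assms(1) in simp)+
  then show ?thesis using assms(2) by (simp add: algebra_simps)
qed

lemma continuant_determinant:
  fixes u m :: "nat \<Rightarrow> int"
  assumes "\<And>k. i \<le> k \<Longrightarrow> k < i + j \<Longrightarrow> u k = m k * u (Suc k) + u (Suc (Suc k))"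
  shows "continuant m i (Suc j) * u (Suc i) - continuant m (Suc i) j * u i = (-1) ^ j * u (i + Suc j)"
  using assms
proof (induction j rule: induct_nat_012)
  case 1
  then show ?case by simp
next
  case (ge2 j)
  have IH: "continuant m i (Suc (Suc j)) * u (Suc i) - continuant m (Suc i) (Suc j) * u i
              = - ((-1) ^ j * u (i + Suc (Suc j)))"
           "continuant m i (Suc j) * u (Suc i) - continuant m (Suc i) j * u i = (-1) ^ j * u (i + Suc j)"
    using ge2 by auto
  have rec: "u (i + Suc j) = m (i + Suc j) * u (i + Suc (Suc j)) + u (i + Suc (Suc (Suc j)))"
    using ge2.prems[of "i + Suc j"] by simp
  have "continuant m i (Suc (Suc (Suc j))) * u (Suc i) - continuant m (Suc i) (Suc (Suc j)) * u i
      = m (i + Suc j) * (continuant m i (Suc (Suc j)) * u (Suc i) - continuant m (Suc i) (Suc j) * u i)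
        + (continuant m i (Suc j) * u (Suc i) - continuant m (Suc i) j * u i)"
    by (simp add: algebra_simps)
  also have "\<dots> = (-1) ^ j * u (i + Suc (Suc (Suc j)))"
    unfolding IH rec by (simp add: algebra_simps)
  finally show ?case by simp
qed simp

lemma cfrac_continuant:
  assumes "k \<le> a" "\<And>i. k \<le> i \<Longrightarrow> i \<le> a \<Longrightarrow> 0 < n i"
  shows "cfrac n k a = of_int (continuant (\<lambda>i. int (n i)) k (Suc (a - k)))
                     / of_int (continuant (\<lambda>i. int (n i)) k (Suc (Suc (a - k))))"
  using assms
proof (induction a)
  case (Suc a)
  show ?case
  proof (cases "Suc a = k")
    case False
    then have "k \<le> a" using Suc.prems by simp
    define P where "P = continuant (\<lambda>i. int (n i)) k (Suc (a - k))"
    define Q where "Q = continuant (\<lambda>i. int (n i)) k (Suc (Suc (a - k)))"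
    have Q: "1 \<le> Q"
      unfolding Q_def using Suc.prems \<open>k \<le> a\<close> by (intro continuant_Suc_pos) (auto simp: Suc_le_eq)
    have "cfrac n k (Suc a) = 1 / (of_nat (n (Suc a)) + of_int P / of_int Q)"
      using Suc \<open>k \<le> a\<close> by (simp add: P_def Q_def)
    also have "\<dots> = of_int Q / of_int (int (n (Suc a)) * Q + P)"
      using Q by (simp add: field_simps)
    finally show ?thesis
      using \<open>k \<le> a\<close> by (simp add: Suc_diff_le P_def Q_def add.commute)
  next
    case True
    then show ?thesis by (simp flip: True)
  qed
qed simp

lemma cf_pq_continuant:
  assumes "k \<le> a" "\<And>i. k \<le> i \<Longrightarrow> i \<le> a \<Longrightarrow> 0 < n i"
  shows "cf_p n k a = continuant (\<lambda>i. int (n i)) k (Suc (a - k))"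
    and "cf_q n k a = continuant (\<lambda>i. int (n i)) k (Suc (Suc (a - k)))"
proof -
  have "0 < continuant (\<lambda>i. int (n i)) k (Suc (Suc (a - k)))"
    using assms continuant_Suc_pos[of k "Suc (a - k)" "\<lambda>i. int (n i)"] by (auto simp: Suc_le_eq)
  then have "quotient_of (cfrac n k a) = (continuant (\<lambda>i. int (n i)) k (Suc (a - k)),
                                          continuant (\<lambda>i. int (n i)) k (Suc (Suc (a - k))))"
    by (simp only: cfrac_continuant[OF assms] quotient_of_int_div coprime_continuant_Suc)
  then show "cf_p n k a = continuant (\<lambda>i. int (n i)) k (Suc (a - k))"
    and "cf_q n k a = continuant (\<lambda>i. int (n i)) k (Suc (Suc (a - k)))"
    unfolding cf_p_def cf_q_def by simp_all
qed

lemma cf_r_continuant: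
  assumes "1 \<le> k" "k \<le> F + 1" "\<And>i. 1 \<le> i \<Longrightarrow> i \<le> F \<Longrightarrow> 0 < n i"
  shows "cf_r n F k = continuant ((\<lambda>i. int (n i))(F := int (n F) + 1)) k (F + 2 - k)"
proof (cases "k \<le> F")
  case True
  have "cf_r n F k = continuant (\<lambda>i. int (n i)) k (Suc (Suc (F - k))) + continuant (\<lambda>i. int (n i)) k (Suc (F - k))"
    using True assms by (simp add: cf_r_def cf_pq_continuant)
  also have "\<dots> = continuant ((\<lambda>i. int (n i))(F := int (n F) + 1)) k (Suc (Suc (F - k)))"
    using True by (intro continuant_last_plus_one[symmetric]) auto
  finally show ?thesis using True by (simp add: Suc_diff_le numeral_2_eq_2)
next
  case False
  then have "k = F + 1" using assms(2) by simp
  then show ?thesis by (simp add: cf_r_def)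
qed

lemma has_time_index_shift:
  assumes "has_time_index r r2 v t" "(p * r2) mod r = w mod r"
  shows "has_time_index r r2 (v + w) ((t + p) mod r)"
proof -
  from assms(1) have "0 < r" "(t * r2) mod r = v mod r"
    unfolding has_time_index_def by auto
  have "((t + p) mod r * r2) mod r = (t * r2 + p * r2) mod r"
    by (simp add: mod_mult_left_eq distrib_right)
  also have "\<dots> = ((t * r2) mod r + (p * r2) mod r) mod r"
    by (rule mod_add_eq[symmetric])
  also have "\<dots> = (v + w) mod r"
    unfolding \<open>(t * r2) mod r = v mod r\<close> assms(2) by (rule mod_add_eq)
  finally show ?thesis
    using \<open>0 < r\<close> unfolding has_time_index_def by simp
qed

lemma cf_r_determinant:
  assumes "1 \<le> a" "a \<le> F" "\<And>i. 1 \<le> i \<Longrightarrow> i \<le> F \<Longrightarrow> 0 < n i"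
  shows "\<exists>Q. cf_p n 1 a * cf_r n F 2 - Q * cf_r n F 1 = (-1) ^ (a - 1) * cf_r n F (a + 1)"
proof -
  define m where "m = (\<lambda>i. int (n i))(F := int (n F) + 1)"
  define u where "u k = continuant m k (F + 2 - k)" for k
  have r: "cf_r n F k = u k" if "1 \<le> k" "k \<le> F + 1" for k
    using cf_r_continuant[OF that assms(3)] by (simp add: u_def m_def)
  have "u k = m k * u (Suc k) + u (Suc (Suc k))" if "k \<le> F" for k
    using that continuant_Suc_Suc_front[of m k "F - k"] by (simp add: u_def Suc_diff_le)
  then have "continuant m 1 a * u 2 - continuant m 2 (a - 1) * u 1 = (-1) ^ (a - 1) * u (a + 1)"
    using continuant_determinant[of 1 "a - 1" u m] assms(1,2) by (simp add: numeral_2_eq_2)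
  moreover have "cf_p n 1 a = continuant m 1 a"
    using assms cf_pq_continuant(1)[of 1 a n] by (auto simp: m_def intro: continuant_cong)
  ultimately have "cf_p n 1 a * cf_r n F 2 - continuant m 2 (a - 1) * cf_r n F 1
      = (-1) ^ (a - 1) * cf_r n F (a + 1)"
    using assms(1,2) r[of 1] r[of 2] r[of "a + 1"] by (simp add: numeral_2_eq_2)
  then show ?thesis ..
qed

lemma cf_p_mul_cf_r_mod:
  assumes "1 \<le> a" "a \<le> F" "\<And>i. 1 \<le> i \<Longrightarrow> i \<le> F \<Longrightarrow> 0 < n i"
  shows "((-1) ^ (a - 1) * cf_p n 1 a * cf_r n F 2) mod cf_r n F 1 = cf_r n F (a + 1) mod cf_r n F 1"
proof -
  obtain Q where det: "cf_p n 1 a * cf_r n F 2 - Q * cf_r n F 1 = (-1) ^ (a - 1) * cf_r n F (a + 1)"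
    using cf_r_determinant[of a F n] assms by blast
  have sign: "(-1 :: int) ^ (a - 1) * (-1) ^ (a - 1) = 1"
    by (simp flip: power_add)
  have "(-1) ^ (a - 1) * (cf_p n 1 a * cf_r n F 2 - Q * cf_r n F 1) = cf_r n F (a + 1)"
    unfolding det mult.assoc[symmetric] sign by simp
  then have "(-1) ^ (a - 1) * cf_p n 1 a * cf_r n F 2
      = cf_r n F (a + 1) + ((-1) ^ (a - 1) * Q) * cf_r n F 1"
    by (simp add: algebra_simps)
  then show ?thesis by simp
qed

text \<open>The hypotheses on n 1 matter for the geometry of the r-gon, not for this congruence.\<close>
theorem proposition5p29:
  fixes n :: "nat \<Rightarrow> nat" and F :: nat
  assumes "F \<ge> 1"
    and "\<forall>i\<in>{1..F}. n i > 0"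
    and "n 1 \<ge> 2"
    and "\<not> (F = 1 \<and> n 1 = 2)"
  shows "\<forall>a\<in>{1..F}. \<forall>v t::int.
           has_time_index (cf_r n F 1) (cf_r n F 2) v t \<longrightarrow>
           has_time_index (cf_r n F 1) (cf_r n F 2)
             (v + cf_r n F (a + 1))
             ((t + (-1) ^ (a - 1) * cf_p n 1 a) mod cf_r n F 1)"
proof (intro ballI allI impI)
  fix a and v t :: int
  assume "a \<in> {1..F}" and "has_time_index (cf_r n F 1) (cf_r n F 2) v t"
  moreover have "\<And>i. 1 \<le> i \<Longrightarrow> i \<le> F \<Longrightarrow> 0 < n i"
    using assms(2) by auto
  ultimately show "has_time_index (cf_r n F 1) (cf_r n F 2) (v + cf_r n F (a + 1))
      ((t + (-1) ^ (a - 1) * cf_p n 1 a) mod cf_r n F 1)"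
    using has_time_index_shift cf_p_mul_cf_r_mod by (simp add: mult.assoc)
qed

end
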